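(* Every relation that is a delta matroid and belongs to IM-conj is basically binary.
   Context: A relation $R\subseteq\{0,1\}^V$ is a delta matroid if for all $x,y\in R$ and all $i$ with $x_i\ne y_i$ there exists $j$ with $x_j\ne y_j$ (possibly $j=i$) such that the configuration obtained from $x$ by flipping coordinates $i$ and $j$ lies in $R$. IM-conj is the class of relations expressible as a conjunction of implications $x_i\le x_j$ and pins $x_i=c$ ($c\in\{0,1\}$). A relation is basically binary if it is equivalent (up to renaming variables) to a Cartesian product of relations of arity at most two. *)

theory Defs
  imports Main "HOL-Library.Disjoint_Sets"
begin

text \<open>Assignments over a finite variable set V: Boolean-valued functions,
  extensional (False outside V). A relation over V is a subset of these.\<close>
definition assignments :: "'v set \<Rightarrow> ('v \<Rightarrow> bool) set" where
  "assignments V = {x. \<forall>v. v \<notin> V \<longrightarrow> x v = False}"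

definition flip2 :: "('v \<Rightarrow> bool) \<Rightarrow> 'v \<Rightarrow> 'v \<Rightarrow> ('v \<Rightarrow> bool)" where
  "flip2 x i j = (\<lambda>v. if v = i \<or> v = j then \<not> x v else x v)"

definition delta_matroid :: "'v set \<Rightarrow> ('v \<Rightarrow> bool) set \<Rightarrow> bool" where
  "delta_matroid V R \<longleftrightarrow>
     (\<forall>x\<in>R. \<forall>y\<in>R. \<forall>i\<in>V. x i \<noteq> y i \<longrightarrow>
        (\<exists>j\<in>V. x j \<noteq> y j \<and> flip2 x i j \<in> R))"

definition IM_conj :: "'v set \<Rightarrow> ('v \<Rightarrow> bool) set \<Rightarrow> bool" where
  "IM_conj V R \<longleftrightarrow>
     (\<exists>Imp Pins. Imp \<subseteq> V \<times> V \<and> Pins \<subseteq> V \<times> (UNIV :: bool set) \<and>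
        R = {x \<in> assignments V. (\<forall>(i, j)\<in>Imp. x i \<longrightarrow> x j) \<and> (\<forall>(i, c)\<in>Pins. x i = c)})"

definition restrict_to :: "('v \<Rightarrow> bool) \<Rightarrow> 'v set \<Rightarrow> ('v \<Rightarrow> bool)" where
  "restrict_to x B = (\<lambda>v. if v \<in> B then x v else False)"

text \<open>Basically binary: R is the Cartesian product, over a partition of V into
  blocks of at most two variables, of relations on those blocks.\<close>
definition basically_binary :: "'v set \<Rightarrow> ('v \<Rightarrow> bool) set \<Rightarrow> bool" where
  "basically_binary V R \<longleftrightarrow>
     (\<exists>P S. partition_on V P \<and> (\<forall>B\<in>P. card B \<le> 2) \<and>
        (\<forall>B\<in>P. S B \<subseteq> assignments B) \<and>
        R = {x \<in> assignments V. \<forall>B\<in>P. restrict_to x B \<in> S B})"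

end

theory Submission
  imports Defs
begin

(* Call a variable
   nonconstant if it takes both values in R, and call two distinct nonconstant
   variables i, j comparable if every member of R satisfies x_i \<le> x_j or every
   member satisfies x_j \<le> x_i.
   (1) IM-conj relations are closed under pointwise meet and join.
   (2) Delta-matroid exchange forbids forks: if some m \<in> R and every member
       differing from m at a also differs from m at b and at c (b, c \<noteq> a), then
       b = c, because a single exchange step flips only two coordinates.
   (3) Combining (1) and (2), every variable has at most one comparable partner.
   (4) A symmetric relation in which each vertex has at most one neighbour
       splits V into blocks {i} or {i, j} of at most two elements.
   (5) Every implication of R between distinct nonconstant variables relates
       comparable variables, hence lies within a block; so an assignment which
       agrees with some member of R on every block satisfies all implications
       and pins, and R is the product of its projections onto the blocks. *)

definition nonconst :: "('v \<Rightarrow> bool) set \<Rightarrow> 'v \<Rightarrow> bool" where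
  "nonconst R i \<longleftrightarrow> (\<exists>u\<in>R. u i) \<and> (\<exists>u\<in>R. \<not> u i)"

definition leR :: "('v \<Rightarrow> bool) set \<Rightarrow> 'v \<Rightarrow> 'v \<Rightarrow> bool" where
  "leR R i j \<longleftrightarrow> (\<forall>w\<in>R. w i \<longrightarrow> w j)"

definition comparable :: "('v \<Rightarrow> bool) set \<Rightarrow> 'v \<Rightarrow> 'v \<Rightarrow> bool" where
  "comparable R i j \<longleftrightarrow>
     i \<noteq> j \<and> nonconst R i \<and> nonconst R j \<and> (leR R i j \<or> leR R j i)"

lemma leR_trans: "leR R a b \<Longrightarrow> leR R b c \<Longrightarrow> leR R a c"
  unfolding leR_def by blast

lemma comparable_sym: "comparable R i j \<Longrightarrow> comparable R j i"
  unfolding comparable_def by blast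

lemma nonconst_in_V:
  assumes "R \<subseteq> assignments V" "nonconst R j"
  shows "j \<in> V"
  using assms unfolding nonconst_def assignments_def by blast

lemma IM_conj_subset: "IM_conj V R \<Longrightarrow> R \<subseteq> assignments V"
  unfolding IM_conj_def by blast

lemma IM_conj_meet_join:
  assumes "IM_conj V R" "w1 \<in> R" "w2 \<in> R"
  shows "(\<lambda>v. w1 v \<and> w2 v) \<in> R" and "(\<lambda>v. w1 v \<or> w2 v) \<in> R"
proof -
  from assms(1) obtain Imp Pins where R: "R = {x \<in> assignments V.
      (\<forall>(i, j)\<in>Imp. x i \<longrightarrow> x j) \<and> (\<forall>(i, c)\<in>Pins. x i = c)}"
    unfolding IM_conj_def by blast
  show "(\<lambda>v. w1 v \<and> w2 v) \<in> R" "(\<lambda>v. w1 v \<or> w2 v) \<in> R"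
    using assms(2,3) unfolding R assignments_def by auto
qed

text \<open>(2) No forks in a delta matroid: if leaving the value of \<open>m\<close> at \<open>a\<close>
  forces leaving it at both \<open>b\<close> and \<open>c\<close>, then \<open>b = c\<close>, since the exchange
  step from \<open>m\<close> towards a member differing at \<open>a\<close> flips just one more
  coordinate.\<close>
lemma delta_matroid_no_fork:
  assumes dm: "delta_matroid V R" and "a \<in> V" "m \<in> R" "t \<in> R" "t a \<noteq> m a"
    and "b \<noteq> a" "c \<noteq> a"
    and forced: "\<And>w. w \<in> R \<Longrightarrow> w a \<noteq> m a \<Longrightarrow> w b \<noteq> m b \<and> w c \<noteq> m c"
  shows "b = c"
proof -
  obtain l where l: "flip2 m a l \<in> R"
    using dm assms(2-5) unfolding delta_matroid_def by metis
  have "flip2 m a l a \<noteq> m a" unfolding flip2_def by simp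
  then have "flip2 m a l b \<noteq> m b" "flip2 m a l c \<noteq> m c"
    using forced[OF l] by auto
  then have "b = l" "c = l"
    using \<open>b \<noteq> a\<close> \<open>c \<noteq> a\<close> unfolding flip2_def by (auto split: if_splits)
  then show ?thesis by simp
qed

text \<open>A nonconstant variable \<open>a\<close> lying below two further nonconstant variables
  \<open>b\<close>, \<open>c\<close> forces \<open>b = c\<close>: apply (2) to the meet of witnesses for \<open>\<not>x_a\<close>,
  \<open>\<not>x_b\<close>, \<open>\<not>x_c\<close>.  Dually with joins for \<open>a\<close> above \<open>b\<close> and \<open>c\<close>.\<close>
lemma no_upward_fork:
  assumes IM: "IM_conj V R" and dm: "delta_matroid V R" and "a \<in> V"
    and "b \<noteq> a" "c \<noteq> a" "nonconst R a" "nonconst R b" "nonconst R c"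
    and "leR R a b" "leR R a c"
  shows "b = c"
proof -
  obtain wa wb wc where w: "wa \<in> R" "wb \<in> R" "wc \<in> R" "\<not> wa a" "\<not> wb b" "\<not> wc c"
    using assms(6-8) unfolding nonconst_def by blast
  define m where "m = (\<lambda>v. (wa v \<and> wb v) \<and> wc v)"
  have "m \<in> R"
    unfolding m_def by (intro IM_conj_meet_join(1)[OF IM] w(1-3))
  obtain t where "t \<in> R" "t a" using assms(6) unfolding nonconst_def by blast
  show ?thesis
  proof (rule delta_matroid_no_fork[OF dm \<open>a \<in> V\<close> \<open>m \<in> R\<close> \<open>t \<in> R\<close>])
    show "t a \<noteq> m a" "b \<noteq> a" "c \<noteq> a" using \<open>t a\<close> w(4) assms(4,5) unfolding m_def by auto
    fix u assume "u \<in> R" "u a \<noteq> m a"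
    then show "u b \<noteq> m b \<and> u c \<noteq> m c"
      using assms(9,10) w(4-6) unfolding m_def leR_def by auto
  qed
qed

lemma no_downward_fork:
  assumes IM: "IM_conj V R" and dm: "delta_matroid V R" and "a \<in> V"
    and "b \<noteq> a" "c \<noteq> a" "nonconst R a" "nonconst R b" "nonconst R c"
    and "leR R b a" "leR R c a"
  shows "b = c"
proof -
  obtain wa wb wc where w: "wa \<in> R" "wb \<in> R" "wc \<in> R" "wa a" "wb b" "wc c"
    using assms(6-8) unfolding nonconst_def by blast
  define m where "m = (\<lambda>v. (wa v \<or> wb v) \<or> wc v)"
  have "m \<in> R"
    unfolding m_def by (intro IM_conj_meet_join(2)[OF IM] w(1-3))
  obtain t where "t \<in> R" "\<not> t a" using assms(6) unfolding nonconst_def by blast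
  show ?thesis
  proof (rule delta_matroid_no_fork[OF dm \<open>a \<in> V\<close> \<open>m \<in> R\<close> \<open>t \<in> R\<close>])
    show "t a \<noteq> m a" "b \<noteq> a" "c \<noteq> a" using \<open>\<not> t a\<close> w(4) assms(4,5) unfolding m_def by auto
    fix u assume "u \<in> R" "u a \<noteq> m a"
    then show "u b \<noteq> m b \<and> u c \<noteq> m c"
      using assms(9,10) w(4-6) unfolding m_def leR_def by auto
  qed
qed

text \<open>(3) Each variable has at most one comparable partner.  Mixed chains
  \<open>j \<le> i \<le> k\<close> reduce to an upward fork at the bottom element.\<close>
lemma comparable_unique:
  assumes IM: "IM_conj V R" and dm: "delta_matroid V R" and "i \<in> V"
    and ij: "comparable R i j" and ik: "comparable R i k"
  shows "j = k"
proof (rule ccontr)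
  assume "j \<noteq> k"
  from ij ik have ne: "j \<noteq> i" "k \<noteq> i"
    and nc: "nonconst R i" "nonconst R j" "nonconst R k"
    and "leR R i j \<or> leR R j i" "leR R i k \<or> leR R k i"
    unfolding comparable_def by auto
  have "j \<in> V" "k \<in> V"
    using nc nonconst_in_V[OF IM_conj_subset[OF IM]] by blast+
  consider "leR R i j" "leR R i k" | "leR R j i" "leR R k i"
    | "leR R k i" "leR R i j" | "leR R j i" "leR R i k"
    using \<open>leR R i j \<or> leR R j i\<close> \<open>leR R i k \<or> leR R k i\<close> by blast
  then show False
  proof cases
    case 1
    then have "j = k" by (rule no_upward_fork[OF IM dm \<open>i \<in> V\<close> ne nc])
    with \<open>j \<noteq> k\<close> show False ..
  next
    case 2
    then have "j = k" by (rule no_downward_fork[OF IM dm \<open>i \<in> V\<close> ne nc])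
    with \<open>j \<noteq> k\<close> show False ..
  next
    case 3
    have "i = j"
      using \<open>j \<noteq> k\<close> ne by (intro no_upward_fork[OF IM dm \<open>k \<in> V\<close> _ _ nc(3,1,2)
          3(1) leR_trans[OF 3]]) auto
    with ne show False by simp
  next
    case 4
    have "i = k"
      using \<open>j \<noteq> k\<close> ne by (intro no_upward_fork[OF IM dm \<open>j \<in> V\<close> _ _ nc(2,1,3)
          4(1) leR_trans[OF 4]]) auto
    with ne show False by simp
  qed
qed

definition closed_nbhd :: "('a \<Rightarrow> 'a \<Rightarrow> bool) \<Rightarrow> 'a \<Rightarrow> 'a set" where
  "closed_nbhd E i = insert i {j. E i j}"

lemma matching_blocks_partition:
  fixes E :: "'a \<Rightarrow> 'a \<Rightarrow> bool"
  assumes sym: "\<And>i j. E i j \<Longrightarrow> E j i"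
    and closed: "\<And>i j. E i j \<Longrightarrow> j \<in> V"
    and unique: "\<And>i j k. i \<in> V \<Longrightarrow> E i j \<Longrightarrow> E i k \<Longrightarrow> j = k"
  shows "partition_on V (closed_nbhd E ` V)"
    and "\<forall>B\<in>closed_nbhd E ` V. card B \<le> 2"
proof -
  have pair: "closed_nbhd E i = {i, j}" if "i \<in> V" "E i j" for i j
    using unique[OF that(1)] that(2) unfolding closed_nbhd_def by blast
  have shape: "closed_nbhd E i = {i} \<or> (\<exists>j. E i j \<and> closed_nbhd E i = {i, j})"
    if "i \<in> V" for i
    using pair[OF that] unfolding closed_nbhd_def by blast
  have self: "i \<in> closed_nbhd E i" for i
    unfolding closed_nbhd_def by simp
  have subset: "closed_nbhd E i \<subseteq> V" if "i \<in> V" for i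
    using closed that unfolding closed_nbhd_def by blast
  have recentre: "closed_nbhd E x = closed_nbhd E i" if "i \<in> V" "x \<in> closed_nbhd E i" for i x
  proof (cases "x = i")
    case False
    then have "E i x" using that(2) unfolding closed_nbhd_def by simp
    then show ?thesis
      using pair[OF that(1)] pair[OF closed sym] by auto
  qed simp
  show "partition_on V (closed_nbhd E ` V)"
  proof (rule partition_onI)
    show "\<Union> (closed_nbhd E ` V) = V" using subset self by blast
    show "{} \<notin> closed_nbhd E ` V" using self by blast
  next
    fix p q assume "p \<in> closed_nbhd E ` V" "q \<in> closed_nbhd E ` V" "p \<noteq> q"
    then show "disjnt p q" unfolding disjnt_def using recentre by blast
  qed
  show "\<forall>B\<in>closed_nbhd E ` V. card B \<le> 2"
  proof
    fix B assume "B \<in> closed_nbhd E ` V"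
    then obtain i where "i \<in> V" "B = closed_nbhd E i" by blast
    then show "card B \<le> 2" using shape[of i] by (auto simp: card_insert_if)
  qed
qed

text \<open>Implications between comparable variables are checked
  inside a block; all other implications and pins involve a constant variable
  or a single variable and are checked against a single member of \<open>R\<close>.\<close>
lemma IM_conj_local_to_global:
  assumes IM: "IM_conj V R" and cover: "\<Union> P = V"
    and comparable_in_block: "\<And>i j. comparable R i j \<Longrightarrow> \<exists>B\<in>P. i \<in> B \<and> j \<in> B"
    and z: "z \<in> assignments V"
    and local: "\<And>B. B \<in> P \<Longrightarrow> \<exists>w\<in>R. \<forall>k\<in>B. z k = w k"
  shows "z \<in> R"
proof -
  from IM obtain Imp Pins where Imp: "Imp \<subseteq> V \<times> V" and Pins: "Pins \<subseteq> V \<times> UNIV"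
    and R: "R = {x \<in> assignments V.
      (\<forall>(i, j)\<in>Imp. x i \<longrightarrow> x j) \<and> (\<forall>(i, c)\<in>Pins. x i = c)}"
    unfolding IM_conj_def by blast
  have pointwise: "\<exists>w\<in>R. z i = w i" if "i \<in> V" for i
    using local cover that by blast
  have pins: "z i = c" if "(i, c) \<in> Pins" for i c
    using pointwise[of i] that Pins unfolding R by blast
  have imps: "z j" if ij: "(i, j) \<in> Imp" and "z i" for i j
  proof -
    have "i \<in> V" "j \<in> V" using ij Imp by auto
    have le: "leR R i j" using ij unfolding R leR_def by auto
    show "z j"
    proof (cases "comparable R i j")
      case True
      then obtain B w where "B \<in> P" "i \<in> B" "j \<in> B" "w \<in> R" "\<forall>k\<in>B. z k = w k"
        using comparable_in_block local by blast
      then show ?thesis using le \<open>z i\<close> unfolding leR_def by auto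
    next
      case False
      obtain wi where wi: "wi \<in> R" "wi i" using pointwise \<open>i \<in> V\<close> \<open>z i\<close> by auto
      obtain wj where wj: "wj \<in> R" "z j = wj j" using pointwise \<open>j \<in> V\<close> by blast
      from False le consider "i = j" | "\<not> nonconst R i" | "\<not> nonconst R j"
        unfolding comparable_def by blast
      then show ?thesis
      proof cases
        case 1
        then show ?thesis using \<open>z i\<close> by simp
      next
        case 2
        then have "wj i" using wi wj(1) unfolding nonconst_def by blast
        then show ?thesis using le wj unfolding leR_def by blast
      next
        case 3
        have "wi j" using le wi unfolding leR_def by blast
        then have "wj j" using 3 wi(1) wj(1) unfolding nonconst_def by blast
        then show ?thesis using wj by simp
      qed
    qed
  qed
  have "\<forall>(i, j)\<in>Imp. z i \<longrightarrow> z j" using imps by blast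
  moreover have "\<forall>(i, c)\<in>Pins. z i = c" using pins by blast
  ultimately show "z \<in> R" unfolding R using z by simp
qed

lemma restrict_to_eq_iff: "restrict_to z B = restrict_to w B \<longleftrightarrow> (\<forall>k\<in>B. z k = w k)"
  unfolding restrict_to_def fun_eq_iff by auto

lemma restrict_to_in_projection:
  "restrict_to z B \<in> (\<lambda>w. restrict_to w B) ` R \<longleftrightarrow> (\<exists>w\<in>R. \<forall>k\<in>B. z k = w k)"
  by (simp add: image_iff restrict_to_eq_iff)

theorem mainTheorem14:
  fixes V :: "'v set" and R :: "('v \<Rightarrow> bool) set"
  assumes "finite V"
    and "R \<subseteq> assignments V"
    and "delta_matroid V R"
    and "IM_conj V R"
  shows "basically_binary V R"
proof -
  define P where "P = closed_nbhd (comparable R) ` V"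
  define S where "S B = (\<lambda>w. restrict_to w B) ` R" for B
  have in_V: "j \<in> V" if "comparable R i j" for i j
    using that nonconst_in_V[OF assms(2)] unfolding comparable_def by blast
  note matching = comparable_sym in_V comparable_unique[OF assms(4,3)]
  have partition: "partition_on V P"
    unfolding P_def using matching by (rule matching_blocks_partition(1))
  have small: "\<forall>B\<in>P. card B \<le> 2"
    unfolding P_def using matching by (rule matching_blocks_partition(2))
  have comparable_in_block: "\<exists>B\<in>P. i \<in> B \<and> j \<in> B" if "comparable R i j" for i j
    using that in_V[OF comparable_sym[OF that]] unfolding P_def closed_nbhd_def by blast
  have cover: "\<Union> P = V" using partition unfolding partition_on_def by blast
  have "\<forall>B\<in>P. S B \<subseteq> assignments B"
    unfolding S_def restrict_to_def assignments_def by force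
  moreover have "R = {x \<in> assignments V. \<forall>B\<in>P. restrict_to x B \<in> S B}"
    using assms(2) IM_conj_local_to_global[OF assms(4) cover comparable_in_block]
    unfolding S_def restrict_to_in_projection by blast
  ultimately show ?thesis
    unfolding basically_binary_def using partition small by blast
qed

end
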